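(* Consider the system $x_{k+1}=Ax_k+Bw_k$, $y^i_k=C^ix_k+D^iv^i_k$ for $i\in\mathcal V=\{1,\dots,N\}$, $k\in\mathbb Z_{\ge 0}$, with $x_0\in[\underline x_0,\overline x_0]$, $w_k\in[\underline w,\overline w]$ and $v^i_k\in[\underline v^i,\overline v^i]$ for all $k$ and $i$. Let agents communicate over a directed graph $G=(\mathcal V,E)$, and let the Distributed Interval Observer (DIO), described in the context, be run with arbitrary gains $L^i,\Gamma^i\in\mathbb R^{n\times m_i}$ ($i\in\mathcal V$) and an arbitrary number $d\in\mathbb N$ of network-update iterations. Then the DIO is a distributed interval framer for the system: for every admissible realization of $x_0$, $(w_k)$, $(v^i_k)$, every agent $i\in\mathcal V$ and every $k\ge 0$, $\underline x^i_k\le x_k\le \overline x^i_k$.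
   Context: All inequalities between vectors are entrywise; $\max$ and $\min$ of vectors are entrywise. For a matrix $M$, $M^+$ is defined entrywise by $M^+_{ij}=\max\{M_{ij},0\}$, and $M^-=M^+-M$. $A\in\mathbb R^{n\times n}$, $B\in\mathbb R^{n\times n_w}$, $C^i\in\mathbb R^{m_i\times n}$, $D^i\in\mathbb R^{m_i\times n_v^i}$, and the bounds $\underline x_0,\overline x_0,\underline w,\overline w$ are known to all agents; agent $i$ knows $\underline v^i,\overline v^i$ and observes only its own outputs $y^i_k$. For node $i$, $\mathcal N_i=\{j:(i,j)\in E\}\cup\{i\}$, and $\mathcal N_i^d$ is the set of nodes reachable from $i$ by a directed path of length at most $d$ (including $i$). DIO: set $T^i=I_n-\Gamma^iC^i$ and $\tilde A^i=T^iA-L^iC^i$. Initialize $\underline x^i_0=\underline x_0$, $\overline x^i_0=\overline x_0$ for all $i$. For each $k\ge0$, each agent $i$ computes $\underline x^{i,0}_{k+1}=(\tilde A^i)^+\underline x^i_k-(\tilde A^i)^-\overline x^i_k+(T^iB)^+\underline w-(T^iB)^-\overline w+L^iy^i_k+\Gamma^iy^i_{k+1}-((L^iD^i)^++(\Gamma^iD^i)^+)\overline v^i+((L^iD^i)^-+(\Gamma^iD^i)^-)\underline v^i$, $\overline x^{i,0}_{k+1}=(\tilde A^i)^+\overline x^i_k-(\tilde A^i)^-\underline x^i_k+(T^iB)^+\overline w-(T^iB)^-\underline w+L^iy^i_k+\Gamma^iy^i_{k+1}-((L^iD^i)^++(\Gamma^iD^i)^+)\underline v^i+((L^iD^i)^-+(\Gamma^iD^i)^-)\overline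 v^i$, and then performs $d$ rounds of network update $\underline x^{i,t}_{k+1}=\max_{j\in\mathcal N_i}\underline x^{j,t-1}_{k+1}$, $\overline x^{i,t}_{k+1}=\min_{j\in\mathcal N_i}\overline x^{j,t-1}_{k+1}$, $t=1,\dots,d$, setting $\underline x^i_{k+1}=\underline x^{i,d}_{k+1}=\max_{j\in\mathcal N_i^d}\underline x^{j,0}_{k+1}$ and $\overline x^i_{k+1}=\overline x^{i,d}_{k+1}=\min_{j\in\mathcal N_i^d}\overline x^{j,0}_{k+1}$. *)

theory Defs
  imports Main "HOL.Real"
begin

text \<open>Vectors and matrices are represented as functions on natural-number indices;
  dimensions are carried explicitly (only indices below the stated dimension matter).\<close>

type_synonym vec = "nat \<Rightarrow> real"
type_synonym mat = "nat \<Rightarrow> nat \<Rightarrow> real"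

definition mv :: "nat \<Rightarrow> mat \<Rightarrow> vec \<Rightarrow> vec" where
  "mv p M x = (\<lambda>r. \<Sum>c<p. M r c * x c)"

definition mm :: "nat \<Rightarrow> mat \<Rightarrow> mat \<Rightarrow> mat" where
  "mm p M N = (\<lambda>r c. \<Sum>j<p. M r j * N j c)"

definition idm :: mat where
  "idm = (\<lambda>r c. if r = c then 1 else 0)"

definition mpos :: "mat \<Rightarrow> mat" where
  "mpos M = (\<lambda>r c. max (M r c) 0)"

definition mneg :: "mat \<Rightarrow> mat" where
  "mneg M = (\<lambda>r c. mpos M r c - M r c)"

definition dio_pred ::
  "nat \<Rightarrow> nat \<Rightarrow> nat \<Rightarrow> nat \<Rightarrow> mat \<Rightarrow> mat \<Rightarrow> mat \<Rightarrow> mat \<Rightarrow> mat \<Rightarrow> mat \<Rightarrow>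
   vec \<Rightarrow> vec \<Rightarrow> vec \<Rightarrow> vec \<Rightarrow> vec \<Rightarrow> vec \<Rightarrow> vec \<Rightarrow> vec \<Rightarrow> vec \<times> vec" where
  "dio_pred n nw mi nvi A B Ci Di Li Gi wl wu vl vu xl xu yk yk1 =
    (let T = (\<lambda>r c. idm r c - mm mi Gi Ci r c);
         At = (\<lambda>r c. mm n T A r c - mm mi Li Ci r c);
         TB = mm n T B;
         LD = mm mi Li Di;
         GD = mm mi Gi Di;
         P = (\<lambda>r c. mpos LD r c + mpos GD r c);
         Q = (\<lambda>r c. mneg LD r c + mneg GD r c)
     in ((\<lambda>r. mv n (mpos At) xl r - mv n (mneg At) xu r
              + mv nw (mpos TB) wl r - mv nw (mneg TB) wu r
              + mv mi Li yk r + mv mi Gi yk1 r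
              - mv nvi P vu r + mv nvi Q vl r),
         (\<lambda>r. mv n (mpos At) xu r - mv n (mneg At) xl r
              + mv nw (mpos TB) wu r - mv nw (mneg TB) wl r
              + mv mi Li yk r + mv mi Gi yk1 r
              - mv nvi P vl r + mv nvi Q vu r)))"

definition nbhd :: "(nat \<times> nat) set \<Rightarrow> nat \<Rightarrow> nat set" where
  "nbhd E i = {j. (i, j) \<in> E} \<union> {i}"

definition net_round :: "(nat \<times> nat) set \<Rightarrow> (nat \<Rightarrow> vec \<times> vec) \<Rightarrow> (nat \<Rightarrow> vec \<times> vec)" where
  "net_round E X = (\<lambda>i. ((\<lambda>r. Max ((\<lambda>j. fst (X j) r) ` nbhd E i)),
                          (\<lambda>r. Min ((\<lambda>j. snd (X j) r) ` nbhd E i))))"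

primrec dio ::
  "nat \<Rightarrow> nat \<Rightarrow> (nat \<Rightarrow> nat) \<Rightarrow> (nat \<Rightarrow> nat) \<Rightarrow> mat \<Rightarrow> mat \<Rightarrow> (nat \<Rightarrow> mat) \<Rightarrow> (nat \<Rightarrow> mat) \<Rightarrow>
   (nat \<Rightarrow> mat) \<Rightarrow> (nat \<Rightarrow> mat) \<Rightarrow> vec \<Rightarrow> vec \<Rightarrow> vec \<Rightarrow> vec \<Rightarrow> (nat \<Rightarrow> vec) \<Rightarrow> (nat \<Rightarrow> vec) \<Rightarrow>
   (nat \<times> nat) set \<Rightarrow> nat \<Rightarrow> (nat \<Rightarrow> nat \<Rightarrow> vec) \<Rightarrow> nat \<Rightarrow> nat \<Rightarrow> vec \<times> vec" where
  "dio n nw m nv A B C D L G x0l x0u wl wu vl vu E d y 0 =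
     (\<lambda>i. (x0l, x0u))"
| "dio n nw m nv A B C D L G x0l x0u wl wu vl vu E d y (Suc k) =
     (net_round E ^^ d)
       (\<lambda>i. dio_pred n nw (m i) (nv i) A B (C i) (D i) (L i) (G i) wl wu (vl i) (vu i)
              (fst (dio n nw m nv A B C D L G x0l x0u wl wu vl vu E d y k i))
              (snd (dio n nw m nv A B C D L G x0l x0u wl wu vl vu E d y k i))
              (y i k) (y i (Suc k)))"

end

theory Submission
  imports Defs
begin

text \<open>With T = I - \<Gamma>C one has x(k+1) = T x(k+1) + \<Gamma>C x(k+1); substituting the dynamics
  and both measured outputs gives, for any gains, the exact identity
  x(k+1) = (TA - LC) x(k) + TB w(k) + L y(k) + \<Gamma> y(k+1) - LD v(k) - \<Gamma>D v(k+1).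
  Each uncertain term M z with l \<le> z \<le> u lies between M^+ l - M^- u and M^+ u - M^- l,
  so an agent's prediction encloses the true state whenever its previous interval did.
  Maxima of valid lower bounds and minima of valid upper bounds are again valid, so
  the network rounds preserve enclosure, and induction on k concludes.\<close>

definition in_box :: "nat \<Rightarrow> vec \<Rightarrow> vec \<Rightarrow> vec \<Rightarrow> bool" where
  "in_box p l u z \<longleftrightarrow> (\<forall>r<p. l r \<le> z r \<and> z r \<le> u r)"

definition agents_enclose :: "nat \<Rightarrow> nat \<Rightarrow> (nat \<Rightarrow> vec \<times> vec) \<Rightarrow> vec \<Rightarrow> bool" where
  "agents_enclose N n X z \<longleftrightarrow> (\<forall>i\<in>{1..N}. in_box n (fst (X i)) (snd (X i)) z)"

lemma mv_cong: "(\<And>c. c < p \<Longrightarrow> x c = x' c) \<Longrightarrow> mv p M x r = mv p M x' r"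
  unfolding mv_def by (auto intro: sum.cong)

lemma mv_mm: "mv q (mm p M N) x r = mv p M (mv q N x) r"
  unfolding mv_def mm_def
  by (simp add: sum_distrib_left sum_distrib_right mult.assoc sum.swap[of _ "{..<q}"])

lemma mv_diff_mat: "mv p (\<lambda>r c. M r c - N r c) x r = mv p M x r - mv p N x r"
  unfolding mv_def by (simp add: left_diff_distrib sum_subtractf)

lemma mv_add_mat: "mv p (\<lambda>r c. M r c + N r c) x r = mv p M x r + mv p N x r"
  unfolding mv_def by (simp add: distrib_right sum.distrib)

lemma mv_add_vec: "mv p M (\<lambda>c. a c + b c) r = mv p M a r + mv p M b r"
  unfolding mv_def by (simp add: distrib_left sum.distrib)

lemma mv_idm: "r < p \<Longrightarrow> mv p idm x r = x r"
  unfolding mv_def idm_def by (simp add: sum.delta if_distrib[of "\<lambda>a. a * _"] cong: if_cong)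

lemma mv_mpos_minus_mneg: "mv p M x r = mv p (mpos M) x r - mv p (mneg M) x r"
  using mv_diff_mat[of p "mpos M" "mneg M" x r] by (simp add: mneg_def)

lemma mv_mono_nonneg:
  assumes "\<And>c. 0 \<le> M r c" and "\<And>c. c < p \<Longrightarrow> x c \<le> x' c"
  shows "mv p M x r \<le> mv p M x' r"
  unfolding mv_def using assms by (auto intro!: sum_mono mult_left_mono)

lemma mv_in_box_bounds:
  assumes "in_box p l u z"
  shows "mv p (mpos M) l r - mv p (mneg M) u r \<le> mv p M z r"
    and "mv p M z r \<le> mv p (mpos M) u r - mv p (mneg M) l r"
proof -
  have "0 \<le> mpos M r c" "0 \<le> mneg M r c" for c
    unfolding mneg_def mpos_def by auto
  then have "mv p (mpos M) l r \<le> mv p (mpos M) z r" "mv p (mpos M) z r \<le> mv p (mpos M) u r"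
    "mv p (mneg M) l r \<le> mv p (mneg M) z r" "mv p (mneg M) z r \<le> mv p (mneg M) u r"
    using assms unfolding in_box_def by (auto intro!: mv_mono_nonneg)
  then show "mv p (mpos M) l r - mv p (mneg M) u r \<le> mv p M z r"
    and "mv p M z r \<le> mv p (mpos M) u r - mv p (mneg M) l r"
    using mv_mpos_minus_mneg[of p M z r] by linarith+
qed

lemma observer_state_identity:
  assumes r: "r < n"
    and T: "T = (\<lambda>r c. idm r c - mm mi Gi Ci r c)"
    and dyn: "\<And>c. c < n \<Longrightarrow> x' c = mv n A x c + mv nw B w c"
    and out: "\<And>c. c < mi \<Longrightarrow> y c = mv n Ci x c + mv nvi Di v c"
    and out': "\<And>c. c < mi \<Longrightarrow> y' c = mv n Ci x' c + mv nvi Di v' c"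
  shows "x' r = mv n (\<lambda>r c. mm n T A r c - mm mi Li Ci r c) x r + mv nw (mm n T B) w r
      + mv mi Li y r + mv mi Gi y' r - mv nvi (mm mi Li Di) v r - mv nvi (mm mi Gi Di) v' r"
proof -
  have "mv n T x' r = x' r - mv mi Gi (mv n Ci x') r"
    unfolding T mv_diff_mat mv_idm[OF r] mv_mm ..
  moreover have "mv n T x' r = mv n T (mv n A x) r + mv nw (mm n T B) w r"
    using mv_cong[of n x' "\<lambda>c. mv n A x c + mv nw B w c" T r] dyn by (simp add: mv_add_vec mv_mm)
  moreover have "mv mi Li y r = mv mi Li (mv n Ci x) r + mv nvi (mm mi Li Di) v r"
    using mv_cong[of mi y "\<lambda>c. mv n Ci x c + mv nvi Di v c" Li r] out by (simp add: mv_add_vec mv_mm)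
  moreover have "mv mi Gi y' r = mv mi Gi (mv n Ci x') r + mv nvi (mm mi Gi Di) v' r"
    using mv_cong[of mi y' "\<lambda>c. mv n Ci x' c + mv nvi Di v' c" Gi r] out' by (simp add: mv_add_vec mv_mm)
  ultimately show ?thesis
    unfolding mv_diff_mat mv_mm by linarith
qed

lemma dio_pred_encloses:
  assumes x: "in_box n xl xu x" and w: "in_box nw wl wu w"
    and v: "in_box nvi vl vu v" and v': "in_box nvi vl vu v'"
    and dyn: "\<And>c. c < n \<Longrightarrow> x' c = mv n A x c + mv nw B w c"
    and out: "\<And>c. c < mi \<Longrightarrow> y c = mv n Ci x c + mv nvi Di v c"
    and out': "\<And>c. c < mi \<Longrightarrow> y' c = mv n Ci x' c + mv nvi Di v' c"
  shows "in_box n (fst (dio_pred n nw mi nvi A B Ci Di Li Gi wl wu vl vu xl xu y y'))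
                  (snd (dio_pred n nw mi nvi A B Ci Di Li Gi wl wu vl vu xl xu y y')) x'"
  unfolding in_box_def
proof (intro allI impI)
  fix r assume r: "r < n"
  define T where "T = (\<lambda>r c. idm r c - mm mi Gi Ci r c)"
  define At where "At = (\<lambda>r c. mm n T A r c - mm mi Li Ci r c)"
  note identity = observer_state_identity[OF r T_def dyn out out', of Li, folded At_def]
  note bounds = mv_in_box_bounds[OF x, of At r] mv_in_box_bounds[OF w, of "mm n T B" r]
    mv_in_box_bounds[OF v, of "mm mi Li Di" r] mv_in_box_bounds[OF v', of "mm mi Gi Di" r]
  show "fst (dio_pred n nw mi nvi A B Ci Di Li Gi wl wu vl vu xl xu y y') r \<le> x' r \<and>
        x' r \<le> snd (dio_pred n nw mi nvi A B Ci Di Li Gi wl wu vl vu xl xu y y') r"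
    using identity bounds
    unfolding dio_pred_def Let_def mv_add_mat T_def[symmetric] At_def[symmetric] by simp
qed

lemma net_round_encloses:
  assumes graph: "E \<subseteq> {1..N} \<times> {1..N}" and X: "agents_enclose N n X z"
  shows "agents_enclose N n (net_round E X) z"
  unfolding agents_enclose_def in_box_def
proof (intro ballI allI impI)
  fix i r assume i: "i \<in> {1..N}" and r: "r < n"
  have sub: "nbhd E i \<subseteq> {1..N}" using graph i unfolding nbhd_def by auto
  then have fin: "finite (nbhd E i)" using finite_subset by blast
  have ne: "i \<in> nbhd E i" unfolding nbhd_def by auto
  have "Max ((\<lambda>j. fst (X j) r) ` nbhd E i) \<le> z r"
    using fin ne sub X r by (subst Max_le_iff) (auto simp: agents_enclose_def in_box_def)
  moreover have "z r \<le> Min ((\<lambda>j. snd (X j) r) ` nbhd E i)"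
    using fin ne sub X r by (subst Min_ge_iff) (auto simp: agents_enclose_def in_box_def)
  ultimately show "fst (net_round E X i) r \<le> z r \<and> z r \<le> snd (net_round E X i) r"
    by (simp add: net_round_def)
qed

lemma net_round_funpow_encloses:
  assumes "E \<subseteq> {1..N} \<times> {1..N}" and "agents_enclose N n X z"
  shows "agents_enclose N n ((net_round E ^^ t) X) z"
  using assms(2) by (induction t) (simp_all add: net_round_encloses[OF assms(1)])

theorem lemma1:
  fixes N n nw :: nat and m nv :: "nat \<Rightarrow> nat"
    and A B :: mat and C D L G :: "nat \<Rightarrow> mat"
    and x0l x0u wl wu :: vec and vl vu :: "nat \<Rightarrow> vec"
    and E :: "(nat \<times> nat) set" and d :: nat
    and x w :: "nat \<Rightarrow> vec" and v y :: "nat \<Rightarrow> nat \<Rightarrow> vec"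
  assumes graph: "E \<subseteq> {1..N} \<times> {1..N}"
    and x0_bd: "\<forall>r<n. x0l r \<le> x 0 r \<and> x 0 r \<le> x0u r"
    and w_bd: "\<forall>k. \<forall>r<nw. wl r \<le> w k r \<and> w k r \<le> wu r"
    and v_bd: "\<forall>i\<in>{1..N}. \<forall>k. \<forall>r<nv i. vl i r \<le> v i k r \<and> v i k r \<le> vu i r"
    and dyn: "\<forall>k. \<forall>r<n. x (Suc k) r = mv n A (x k) r + mv nw B (w k) r"
    and outp: "\<forall>i\<in>{1..N}. \<forall>k. \<forall>r<m i. y i k r = mv n (C i) (x k) r + mv (nv i) (D i) (v i k) r"
  shows "\<forall>i\<in>{1..N}. \<forall>k. \<forall>r<n.
           fst (dio n nw m nv A B C D L G x0l x0u wl wu vl vu E d y k i) r \<le> x k r \<and>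
           x k r \<le> snd (dio n nw m nv A B C D L G x0l x0u wl wu vl vu E d y k i) r"
proof -
  let ?X = "dio n nw m nv A B C D L G x0l x0u wl wu vl vu E d y"
  have "agents_enclose N n (?X k) (x k)" for k
  proof (induction k)
    case 0
    show ?case using x0_bd by (simp add: agents_enclose_def in_box_def)
  next
    case (Suc k)
    let ?P = "\<lambda>i. dio_pred n nw (m i) (nv i) A B (C i) (D i) (L i) (G i) wl wu (vl i) (vu i)
                   (fst (?X k i)) (snd (?X k i)) (y i k) (y i (Suc k))"
    have "agents_enclose N n ?P (x (Suc k))"
      unfolding agents_enclose_def
    proof
      fix i assume i: "i \<in> {1..N}"
      show "in_box n (fst (?P i)) (snd (?P i)) (x (Suc k))"
        using Suc.IH i w_bd v_bd dyn outp
        by (intro dio_pred_encloses[where v = "v i k" and v' = "v i (Suc k)" and w = "w k"])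
          (auto simp: agents_enclose_def in_box_def)
    qed
    then show ?case
      using net_round_funpow_encloses[OF graph] by simp
  qed
  then show ?thesis
    unfolding agents_enclose_def in_box_def by blast
qed

end
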